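(* Fix $m<n$. The triples of statistics $(\mathrm{Rec},\mathrm{psa},\mathrm{wait})$ on the set of ordered $(m,n)$-forests and $(\mathrm{Rec},\mathrm{lucky},\mathrm{probes})$ on the set of $(m,n)$-parking functions are jointly equidistributed: for every set $R$ and integers $a,b$, the number of ordered $(m,n)$-forests $F$ with $(\mathrm{Rec}(F),\mathrm{psa}(F),\mathrm{wait}(F))=(R,a,b)$ equals the number of $(m,n)$-parking functions $\pi$ with $(\mathrm{Rec}(\pi),\mathrm{lucky}(\pi),\mathrm{probes}(\pi))=(R,a,b)$.
   Context: $[n]=\{1,\dots,n\}$, $[n]_0=\{0,\dots,n\}$. Ordered forests: an ordered $(m,n)$-forest is a rooted forest with $n+1$ nodes and $m$ edges whose component trees $T_0,\dots,T_{n-m}$ are totally ordered, with roots unlabeled and marked $\circ,\circ_1,\dots,\circ_{n-m}$, and with its $m$ non-root vertices labeled bijectively by $[m]$. Priority search on $F$: initially only the children of $\circ$ are unblocked; at each step one visits the unblocked unvisited node with the smallest label and unblocks its children; when all nodes of a tree have been visited, one moves to the next tree, visits its root and unblocks the root's children. Steps are numbered $1,\dots,n$, with $\circ$ considered visited at step $0$. The priority traversal of $F$ is the word whose $i$-th letter is the label of the node visited at step $i$, or $-$ if that node is a root. A forest record of $F$ is a non-root node whose label is the largest label among the non-root nodes on the path from its root to it; $\mathrm{Rec}(F)$ is the set of forest records. A non-root vertex is a priority small ascent if it is visited at the step immediately after its parent; $\mathrm{psa}(F)$ is their number. The waiting time of a non-root vertex visited at step $b$ whose parent was visited at step $a$ is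 $b-a$ (the number of steps during which it is unblocked, counting the step at which it is visited); $\mathrm{wait}(F)$ is the sum of waiting times over all non-root vertices. Partial parking functions: an $(m,n)$-parking function is a map $\pi:[m]\to[n]$ such that when cars $1,\dots,m$ arrive in order to spots $1,\dots,n$ and car $i$ parks in the first empty spot $\ge\pi(i)$, all cars park. Its bird's eye permutation is the word $\omega(1)\cdots\omega(n)$ where $\omega(s)$ is the car parked at spot $s$, or $-$ if spot $s$ is empty. A record of a word in $[m]\cup\{-\}$ is a left-to-right maximum of one of its maximal subwords not containing $-$; $\mathrm{Rec}(\pi)$ is the set of records of the bird's eye permutation of $\pi$. A car is lucky if it parks at its preferred spot; $\mathrm{lucky}(\pi)$ is the number of lucky cars. $\mathrm{probes}(\pi)$ is the total number of parking attempts (successful or not) of all cars, where car $i$ parking at spot $s$ makes $s-\pi(i)+1$ attempts. *)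

theory Defs
  imports "HOL-Library.FuncSet"
begin

text \<open>Nodes: Inl i is the non-root vertex labelled i (1 <= i <= m);
  Inr j is the root of tree T_j (0 <= j <= n-m), Inr 0 being the root o.
  An ordered (m,n)-forest is encoded by its parent map on the non-root vertices.\<close>

type_synonym node = "nat + nat"

definition up :: "(nat \<Rightarrow> node) \<Rightarrow> node \<Rightarrow> node" where
  "up p v = (case v of Inl i \<Rightarrow> p i | Inr r \<Rightarrow> Inr r)"

definition ordered_forests :: "nat \<Rightarrow> nat \<Rightarrow> (nat \<Rightarrow> node) set" where
  "ordered_forests m n =
     {p. p \<in> {1..m} \<rightarrow>\<^sub>E (Inl ` {1..m} \<union> Inr ` {0..n-m})
         \<and> (\<forall>i\<in>{1..m}. \<exists>k. \<not> isl ((up p ^^ k) (Inl i)))}"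

definition ps_next :: "nat \<Rightarrow> (nat \<Rightarrow> node) \<Rightarrow> node list \<Rightarrow> node" where
  "ps_next m p vs =
     (let U = {i\<in>{1..m}. p i \<in> set vs \<and> Inl i \<notin> set vs}
      in if U \<noteq> {} then Inl (Min U) else Inr (length (filter (\<lambda>x. \<not> isl x) vs)))"

text \<open>List of nodes in the order visited: entry k is the node visited at step k (0 <= k <= n).\<close>
definition ps_order :: "nat \<Rightarrow> nat \<Rightarrow> (nat \<Rightarrow> node) \<Rightarrow> node list" where
  "ps_order m n p = ((\<lambda>vs. vs @ [ps_next m p vs]) ^^ n) [Inr 0]"

definition visit_step :: "nat \<Rightarrow> nat \<Rightarrow> (nat \<Rightarrow> node) \<Rightarrow> node \<Rightarrow> nat" where
  "visit_step m n p v = (LEAST k. ps_order m n p ! k = v)"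

definition forest_Rec :: "nat \<Rightarrow> (nat \<Rightarrow> node) \<Rightarrow> nat set" where
  "forest_Rec m p = {i\<in>{1..m}. \<forall>k j. (up p ^^ k) (Inl i) = Inl j \<longrightarrow> j \<le> i}"

definition psa :: "nat \<Rightarrow> nat \<Rightarrow> (nat \<Rightarrow> node) \<Rightarrow> nat" where
  "psa m n p = card {i\<in>{1..m}. visit_step m n p (Inl i) = visit_step m n p (p i) + 1}"

definition wait :: "nat \<Rightarrow> nat \<Rightarrow> (nat \<Rightarrow> node) \<Rightarrow> nat" where
  "wait m n p = (\<Sum>i\<in>{1..m}. visit_step m n p (Inl i) - visit_step m n p (p i))"

text \<open>Occupancy after cars 1..i have arrived: spot s holds Some car or None.\<close>
fun occ :: "(nat \<Rightarrow> nat) \<Rightarrow> nat \<Rightarrow> nat \<Rightarrow> nat \<Rightarrow> nat option" where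
  "occ \<pi> n 0 = (\<lambda>s. None)"
| "occ \<pi> n (Suc i) =
     (let w = occ \<pi> n i; S = {s. \<pi> (Suc i) \<le> s \<and> s \<le> n \<and> w s = None}
      in if S = {} then w else w(Min S := Some (Suc i)))"

definition parking_functions :: "nat \<Rightarrow> nat \<Rightarrow> (nat \<Rightarrow> nat) set" where
  "parking_functions m n =
     {\<pi>. \<pi> \<in> {1..m} \<rightarrow>\<^sub>E {1..n}
        \<and> (\<forall>i\<in>{1..m}. \<exists>s. \<pi> i \<le> s \<and> s \<le> n \<and> occ \<pi> n (i - 1) s = None)}"

definition spot :: "(nat \<Rightarrow> nat) \<Rightarrow> nat \<Rightarrow> nat \<Rightarrow> nat" where
  "spot \<pi> n i = Min {s. \<pi> i \<le> s \<and> s \<le> n \<and> occ \<pi> n (i - 1) s = None}"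

text \<open>Bird's eye permutation: letter at position s-1 is the car at spot s (None = '-').\<close>
definition birds_eye :: "nat \<Rightarrow> nat \<Rightarrow> (nat \<Rightarrow> nat) \<Rightarrow> nat option list" where
  "birds_eye m n \<pi> = map (occ \<pi> n m) [1..<Suc n]"

text \<open>Records of a word over [m] and '-': left-to-right maxima of maximal '-'-free subwords.\<close>
definition word_Rec :: "nat option list \<Rightarrow> nat set" where
  "word_Rec w = {c. \<exists>k<length w. w ! k = Some c \<and>
      (\<forall>j<k. (\<forall>t\<in>{j..k}. w ! t \<noteq> None) \<longrightarrow> the (w ! j) < c)}"

definition pf_Rec :: "nat \<Rightarrow> nat \<Rightarrow> (nat \<Rightarrow> nat) \<Rightarrow> nat set" where
  "pf_Rec m n \<pi> = word_Rec (birds_eye m n \<pi>)"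

definition lucky :: "nat \<Rightarrow> nat \<Rightarrow> (nat \<Rightarrow> nat) \<Rightarrow> nat" where
  "lucky m n \<pi> = card {i\<in>{1..m}. spot \<pi> n i = \<pi> i}"

definition probes :: "nat \<Rightarrow> nat \<Rightarrow> (nat \<Rightarrow> nat) \<Rightarrow> nat" where
  "probes m n \<pi> = (\<Sum>i\<in>{1..m}. spot \<pi> n i - \<pi> i + 1)"

end

theory Submission
  imports Defs
begin

text \<open>The bijection sends a forest to the parking function in which car i prefers the spot
  right after the step at which priority search visits the parent of i. Car i then parks exactly
  at the step at which i is visited: the spots in between are taken by the smaller labels that
  priority search prefers while i is unblocked. So occupied spots are visits of non-roots and empty
  spots are visits of roots, lucky cars are priority small ascents and probes are waiting times.
  The blocks of the bird's eye word are the traversals of the trees, and a letter is a maximum of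
  its block prefix iff it is a forest record, because every node visited earlier in the same tree
  is bounded by an ancestor of the letter, and every ancestor is visited earlier in the same tree.
  The inverse reads off the parent of car i at the spot just before its preferred one.\<close>

section \<open>Priority search\<close>

lemma ps_order_0 [simp]: "ps_order m 0 p = [Inr 0]"
  by (simp add: ps_order_def)

lemma ps_order_Suc: "ps_order m (Suc k) p = ps_order m k p @ [ps_next m p (ps_order m k p)]"
  by (simp add: ps_order_def)

lemma length_ps_order [simp]: "length (ps_order m k p) = Suc k"
  by (induction k) (simp_all add: ps_order_Suc)

lemma take_ps_order: "k \<le> K \<Longrightarrow> take (Suc k) (ps_order m K p) = ps_order m k p"
proof (induction K)
  case (Suc K)
  then show ?case
    by (cases "k = Suc K") (simp_all add: ps_order_Suc)
qed simp

lemma nth_ps_order: "k \<le> K \<Longrightarrow> ps_order m K p ! k = ps_order m k p ! k"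
  by (metis take_ps_order lessI nth_take)

lemma nth_ps_order_ps_next:
  assumes "0 < s" "s \<le> K"
  shows "ps_order m K p ! s = ps_next m p (take s (ps_order m K p))"
proof -
  obtain k where k: "s = Suc k" using assms(1) by (cases s) auto
  have "ps_order m K p ! s = ps_order m s p ! s" using nth_ps_order assms(2) by blast
  also have "\<dots> = ps_next m p (ps_order m k p)" by (simp add: k ps_order_Suc nth_append)
  also have "ps_order m k p = take s (ps_order m K p)" using take_ps_order assms(2) k by simp
  finally show ?thesis .
qed

definition unblocked :: "nat \<Rightarrow> (nat \<Rightarrow> node) \<Rightarrow> node list \<Rightarrow> nat set" where
  "unblocked m p vs = {i\<in>{1..m}. p i \<in> set vs \<and> Inl i \<notin> set vs}"

lemma finite_unblocked [simp]: "finite (unblocked m p vs)"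
  by (simp add: unblocked_def)

lemma ps_next_eq: "ps_next m p vs = (if unblocked m p vs \<noteq> {} then Inl (Min (unblocked m p vs))
    else Inr (length (filter (\<lambda>x. \<not> isl x) vs)))"
  by (simp only: ps_next_def unblocked_def Let_def)

lemma up_Inl [simp]: "up p (Inl i) = p i"
  by (simp add: up_def)

lemma up_Inr [simp]: "up p (Inr r) = Inr r"
  by (simp add: up_def)

lemma funpow_up_Inr [simp]: "(up p ^^ d) (Inr r) = Inr r"
  by (induction d) auto

lemma funpow_up_Suc_Inl: "(up p ^^ Suc d) (Inl i) = (up p ^^ d) (p i)"
  by (simp add: funpow_Suc_right del: funpow.simps)

definition nodes :: "nat \<Rightarrow> nat \<Rightarrow> node set" where
  "nodes m n = Inl ` {1..m} \<union> Inr ` {0..n-m}"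

lemma Inl_in_nodes [simp]: "Inl i \<in> nodes m n \<longleftrightarrow> i \<in> {1..m}"
  by (auto simp: nodes_def)

lemma Inr_in_nodes [simp]: "Inr r \<in> nodes m n \<longleftrightarrow> r \<le> n - m"
  by (auto simp: nodes_def)

lemma finite_nodes [simp]: "finite (nodes m n)"
  by (simp add: nodes_def)

lemma card_nodes: "m < n \<Longrightarrow> card (nodes m n) = Suc n"
  unfolding nodes_def by (subst card_Un_disjoint) (auto simp: card_image)

lemma card_less_eq_card_atLeastAtMost:
  fixes s :: nat
  assumes "P 0" "P s"
  shows "card {t. t < s \<and> P t} = card {t\<in>{1..s}. P t}"
proof (cases s)
  case (Suc s')
  have "{t. t < s \<and> P t} = insert 0 {t\<in>{1..s'}. P t}" "{t\<in>{1..s}. P t} = insert s {t\<in>{1..s'}. P t}"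
    using Suc assms by auto
  then show ?thesis using Suc by simp
qed simp

definition ps_prefix_inv :: "nat \<Rightarrow> nat \<Rightarrow> node list \<Rightarrow> bool" where
  "ps_prefix_inv m n vs \<longleftrightarrow> distinct vs \<and> set vs \<subseteq> nodes m n
     \<and> {r. Inr r \<in> set vs} = {0..<length (filter (\<lambda>x. \<not> isl x) vs)}"

locale ordered_forest =
  fixes m n :: nat and p :: "nat \<Rightarrow> node"
  assumes forest: "p \<in> ordered_forests m n" and less: "m < n"
begin

abbreviation visits :: "node list" where
  "visits \<equiv> ps_order m n p"

abbreviation step :: "node \<Rightarrow> nat" where
  "step \<equiv> visit_step m n p"

abbreviation unblocked_at :: "nat \<Rightarrow> nat set" where
  "unblocked_at s \<equiv> unblocked m p (take s visits)"

lemma parent_in_nodes: "i \<in> {1..m} \<Longrightarrow> p i \<in> nodes m n"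
  using forest unfolding ordered_forests_def nodes_def by auto

lemma extensional: "p \<in> extensional {1..m}"
  using forest unfolding ordered_forests_def by (auto simp: PiE_def)

lemma reaches_root: "i \<in> {1..m} \<Longrightarrow> \<exists>k. \<not> isl ((up p ^^ k) (Inl i))"
  using forest unfolding ordered_forests_def by auto

lemma parent_cases:
  assumes "i \<in> {1..m}"
  obtains q where "p i = Inl q" "q \<in> {1..m}" | r where "p i = Inr r"
  using parent_in_nodes[OF assms] by (cases "p i") auto

lemma ancestor_in_nodes: "i \<in> {1..m} \<Longrightarrow> (up p ^^ d) (Inl i) \<in> nodes m n"
proof (induction d arbitrary: i)
  case (Suc d)
  show ?case
    unfolding funpow_up_Suc_Inl using Suc parent_in_nodes[OF Suc.prems]
    by (cases rule: parent_cases[OF Suc.prems]) auto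
qed simp

lemma ancestors_unvisited:
  assumes closed: "unblocked m p vs = {}"
  shows "i \<in> {1..m} \<Longrightarrow> Inl i \<notin> set vs \<Longrightarrow> (up p ^^ d) (Inl i) \<notin> set vs"
proof (induction d arbitrary: i)
  case (Suc d)
  have "p i \<notin> set vs" using closed Suc.prems by (auto simp: unblocked_def)
  with Suc show ?case
    unfolding funpow_up_Suc_Inl by (cases rule: parent_cases[OF Suc.prems(1)]) auto
qed simp

lemma unvisited_root_exists:
  assumes inv: "ps_prefix_inv m n vs" and len: "length vs \<le> n"
    and closed: "unblocked m p vs = {}"
  shows "length (filter (\<lambda>x. \<not> isl x) vs) \<le> n - m"
proof (rule ccontr)
  assume "\<not> ?thesis"
  then have all_roots: "Inr r \<in> set vs" if "r \<le> n - m" for r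
    using inv that by (auto simp: ps_prefix_inv_def)
  have "card (set vs) = length vs" using inv distinct_card by (auto simp: ps_prefix_inv_def)
  then have "card (set vs) < card (nodes m n)" using len card_nodes[OF less] by simp
  then have "\<not> nodes m n \<subseteq> set vs" using card_mono[OF finite_set] by fastforce
  then obtain y where y: "y \<in> nodes m n" "y \<notin> set vs" by blast
  then obtain i where i: "y = Inl i" "i \<in> {1..m}"
    using all_roots by (auto simp: nodes_def)
  obtain d where d: "\<not> isl ((up p ^^ d) (Inl i))" using reaches_root[OF i(2)] by blast
  then obtain r where "(up p ^^ d) (Inl i) = Inr r" "r \<le> n - m"
    using ancestor_in_nodes[OF i(2), of d] by (cases "(up p ^^ d) (Inl i)") auto
  moreover have "(up p ^^ d) (Inl i) \<notin> set vs"
    using ancestors_unvisited[OF closed i(2)] y i by simp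
  ultimately show False using all_roots by simp
qed

lemma ps_prefix_inv_snoc:
  assumes inv: "ps_prefix_inv m n vs" and len: "length vs \<le> n"
  shows "ps_prefix_inv m n (vs @ [ps_next m p vs])"
proof -
  define r where "r = length (filter (\<lambda>x. \<not> isl x) vs)"
  have roots: "{r. Inr r \<in> set vs} = {0..<r}" using inv by (simp add: ps_prefix_inv_def r_def)
  show ?thesis
  proof (cases "unblocked m p vs = {}")
    case False
    then have "Min (unblocked m p vs) \<in> unblocked m p vs" by simp
    moreover have "ps_next m p vs = Inl (Min (unblocked m p vs))" using False by (simp add: ps_next_eq)
    ultimately show ?thesis using inv by (auto simp: ps_prefix_inv_def unblocked_def)
  next
    case True
    have "ps_next m p vs = Inr r" using True by (simp add: ps_next_eq r_def)
    moreover have "r \<le> n - m" using unvisited_root_exists[OF inv len True] by (simp add: r_def)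
    moreover have "{r'. Inr r' \<in> set (vs @ [Inr r])} = {0..<Suc r}"
      using roots by (auto simp: set_eq_iff less_Suc_eq)
    ultimately show ?thesis using inv roots by (auto simp: ps_prefix_inv_def r_def)
  qed
qed

lemma ps_prefix_inv_ps_order: "k \<le> n \<Longrightarrow> ps_prefix_inv m n (ps_order m k p)"
proof (induction k)
  case 0
  then show ?case by (simp add: ps_prefix_inv_def)
next
  case (Suc k)
  then show ?case using ps_prefix_inv_snoc[of "ps_order m k p"] by (simp add: ps_order_Suc)
qed

lemma distinct_visits: "distinct visits"
  and set_visits: "set visits = nodes m n"
proof -
  have inv: "ps_prefix_inv m n visits" using ps_prefix_inv_ps_order by simp
  then show dist: "distinct visits" by (simp add: ps_prefix_inv_def)
  have "card (set visits) = card (nodes m n)"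
    using distinct_card[OF dist] card_nodes[OF less] by simp
  then show "set visits = nodes m n"
    using inv by (simp add: ps_prefix_inv_def card_subset_eq)
qed

lemma visits_0 [simp]: "visits ! 0 = Inr 0"
  using nth_ps_order[of 0 n m p] by simp

lemma visits_in_nodes: "k \<le> n \<Longrightarrow> visits ! k \<in> nodes m n"
  using set_visits by (metis length_ps_order le_imp_less_Suc nth_mem)

lemma step_nth_visits [simp]:
  assumes "k \<le> n"
  shows "step (visits ! k) = k"
proof -
  let ?j = "LEAST j. visits ! j = visits ! k"
  have "?j \<le> k" by (rule Least_le) simp
  moreover have "visits ! ?j = visits ! k" by (rule LeastI) simp
  ultimately show ?thesis
    using nth_eq_iff_index_eq[OF distinct_visits] assms by (simp add: visit_step_def)
qed

lemma step_le: "v \<in> nodes m n \<Longrightarrow> step v \<le> n"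
  and visits_step [simp]: "v \<in> nodes m n \<Longrightarrow> visits ! step v = v"
proof -
  assume "v \<in> nodes m n"
  then obtain k where "k \<le> n" "visits ! k = v"
    using set_visits by (metis in_set_conv_nth length_ps_order less_Suc_eq_le)
  then show "step v \<le> n" "visits ! step v = v" by auto
qed

lemma step_inj: "v \<in> nodes m n \<Longrightarrow> w \<in> nodes m n \<Longrightarrow> step v = step w \<Longrightarrow> v = w"
  by (metis visits_step)

lemma step_pos: "i \<in> {1..m} \<Longrightarrow> 0 < step (Inl i)"
  by (metis Inl_in_nodes visits_0 visits_step gr0I sum.distinct(1))

lemma mem_take_visits:
  assumes "s \<le> Suc n"
  shows "v \<in> set (take s visits) \<longleftrightarrow> v \<in> nodes m n \<and> step v < s"
proof
  assume "v \<in> set (take s visits)"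
  then obtain j where "j < s" "j \<le> n" "visits ! j = v"
    by (auto simp: in_set_conv_nth)
  then show "v \<in> nodes m n \<and> step v < s" using visits_in_nodes by auto
next
  assume v: "v \<in> nodes m n \<and> step v < s"
  then have "take s visits ! step v = v" by simp
  moreover have "step v < length (take s visits)" using v assms step_le by simp
  ultimately show "v \<in> set (take s visits)" by (metis nth_mem)
qed

lemma visits_unblocked:
  assumes "0 < s" "s \<le> n" "unblocked_at s \<noteq> {}"
  shows "visits ! s = Inl (Min (unblocked_at s))"
  using nth_ps_order_ps_next[OF assms(1,2)] assms(3) by (simp add: ps_next_eq)

lemma step_parent_less:
  assumes i: "i \<in> {1..m}"
  shows "step (p i) < step (Inl i)"
proof -
  let ?s = "step (Inl i)"
  have s: "0 < ?s" "?s \<le> n" using step_pos step_le i by auto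
  have "ps_next m p (take ?s visits) = visits ! ?s" using nth_ps_order_ps_next[OF s] by simp
  also have "\<dots> = Inl i" using i by simp
  finally have "ps_next m p (take ?s visits) = Inl i" .
  then have "unblocked_at ?s \<noteq> {}" "i = Min (unblocked_at ?s)"
    by (auto simp: ps_next_eq split: if_splits)
  then have "i \<in> unblocked_at ?s" using Min_in finite_unblocked by metis
  then show ?thesis using mem_take_visits s by (simp add: unblocked_def)
qed

text \<open>The child stays unblocked meanwhile, so priority search can only choose smaller labels.\<close>
lemma visit_between_parent_child:
  assumes i: "i \<in> {1..m}" and u: "step (p i) < u" "u < step (Inl i)"
  obtains j where "visits ! u = Inl j" "j \<in> {1..m}" "j < i"
proof -
  have u1: "0 < u" "u \<le> n" using u step_le[of "Inl i"] i by auto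
  have i_unblocked: "i \<in> unblocked_at u"
    unfolding unblocked_def using i u u1 mem_take_visits parent_in_nodes by auto
  then have ne: "unblocked_at u \<noteq> {}" by blast
  have "Min (unblocked_at u) \<in> unblocked_at u" using Min_in ne by simp
  moreover have "Min (unblocked_at u) \<le> i" using i_unblocked by simp
  moreover have "Min (unblocked_at u) \<noteq> i"
  proof
    assume "Min (unblocked_at u) = i"
    then have "step (Inl i) = u" using visits_unblocked[OF u1 ne] u1 step_nth_visits by metis
    then show False using u by simp
  qed
  ultimately show ?thesis using that visits_unblocked[OF u1 ne] by (auto simp: unblocked_def)
qed

lemma visits_root_number:
  assumes s: "s \<le> n" and r: "visits ! s = Inr r"
  shows "r = card {t\<in>{1..s}. \<not> isl (visits ! t)}"
proof (cases "s = 0")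
  case False
  have "ps_next m p (take s visits) = Inr r" using nth_ps_order_ps_next s r False by simp
  then have "r = length (filter (\<lambda>x. \<not> isl x) (take s visits))"
    by (auto simp: ps_next_eq split: if_splits)
  also have "\<dots> = card {t. t < s \<and> \<not> isl (take s visits ! t)}"
    using s by (simp add: length_filter_conv_card)
  also have "\<dots> = card {t. t < s \<and> \<not> isl (visits ! t)}"
    by (intro arg_cong[where f=card]) auto
  also have "\<dots> = card {t\<in>{1..s}. \<not> isl (visits ! t)}"
    using r by (intro card_less_eq_card_atLeastAtMost) simp_all
  finally show ?thesis .
qed (use r in simp)

lemma step_ancestor_le:
  "i \<in> {1..m} \<Longrightarrow> step ((up p ^^ d) (Inl i)) \<le> step (Inl i)"
proof (induction d arbitrary: i)
  case (Suc d)
  have "step (p i) < step (Inl i)" using step_parent_less[OF Suc.prems] .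
  then show ?case
    unfolding funpow_up_Suc_Inl using Suc.IH by (cases rule: parent_cases[OF Suc.prems]) force+
qed simp

lemma visits_nonroot_below_ancestor:
  "i \<in> {1..m} \<Longrightarrow> step ((up p ^^ d) (Inl i)) < u \<Longrightarrow> u \<le> step (Inl i) \<Longrightarrow>
    isl (visits ! u)"
proof (induction d arbitrary: i)
  case 0
  then show ?case by simp
next
  case (Suc d)
  have below_parent: "isl (visits ! u)" if "step (p i) < u"
  proof (cases "u = step (Inl i)")
    case True
    then show ?thesis using Suc.prems(1) by simp
  next
    case False
    then show ?thesis
      using visit_between_parent_child[OF Suc.prems(1) that] Suc.prems(3) by (metis isl_def le_neq_implies_less)
  qed
  have anc: "step ((up p ^^ d) (p i)) < u"
    using Suc.prems(2) by (simp only: funpow_up_Suc_Inl)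
  show ?case
  proof (cases rule: parent_cases[OF Suc.prems(1)])
    case (1 q)
    then show ?thesis
      using Suc.IH[of q] anc below_parent by (cases "u \<le> step (Inl q)") auto
  next
    case (2 r)
    then show ?thesis using below_parent anc by simp
  qed
qed

text \<open>Either z is visited after the parent of i, and then z < i, or the parent lies in the run
  and we recurse to it.\<close>
lemma visited_in_run_le_ancestor:
  assumes "k \<le> n" "visits ! k = Inl i" "j < k" "\<forall>u\<in>{j..k}. isl (visits ! u)" "visits ! j = Inl z"
  shows "\<exists>d a. (up p ^^ d) (Inl i) = Inl a \<and> z \<le> a"
  using assms
proof (induction k arbitrary: i rule: less_induct)
  case (less k)
  have i: "i \<in> {1..m}" using visits_in_nodes[OF less.prems(1)] less.prems(2) by simp
  have Ti: "step (Inl i) = k" using step_nth_visits[OF less.prems(1)] less.prems(2) by simp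
  show ?case
  proof (cases "step (p i) < j")
    case True
    then obtain z' where "visits ! j = Inl z'" "z' < i"
      using visit_between_parent_child[OF i True] less.prems(3) Ti by metis
    then show ?thesis using less.prems(5) by (intro exI[of _ 0] exI[of _ i]) auto
  next
    case False
    have parent_less: "step (p i) < k" using step_parent_less[OF i] Ti by simp
    then have "isl (visits ! step (p i))" using less.prems(4) False by simp
    then obtain q where q: "p i = Inl q" "q \<in> {1..m}"
      using parent_in_nodes[OF i] by (cases "p i") auto
    then have up: "(up p ^^ Suc d) (Inl i) = (up p ^^ d) (Inl q)" for d
      by (simp only: funpow_up_Suc_Inl)
    show ?thesis
    proof (cases "step (Inl q) = j")
      case True
      then have "z = q" using less.prems(5) visits_step[of "Inl q"] q(2) by simp
      then show ?thesis using up[of 0] by (intro exI[of _ 1] exI[of _ q]) simp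
    next
      case False
      then have "j < step (Inl q)" using \<open>\<not> step (p i) < j\<close> q by simp
      moreover have "step (Inl q) < k" using parent_less q by simp
      ultimately obtain d a where "(up p ^^ d) (Inl q) = Inl a" "z \<le> a"
        using less.IH[of "step (Inl q)" q] less.prems q(2) by fastforce
      then show ?thesis using up[of d] by metis
    qed
  qed
qed

end

section \<open>Parking\<close>

abbreviation free_spots :: "(nat \<Rightarrow> nat) \<Rightarrow> nat \<Rightarrow> nat \<Rightarrow> nat set" where
  "free_spots \<pi> n i \<equiv> {s. \<pi> i \<le> s \<and> s \<le> n \<and> occ \<pi> n (i - 1) s = None}"

lemma finite_free_spots [simp]: "finite (free_spots \<pi> n i)"
  by (rule finite_subset[of _ "{..n}"]) auto

text \<open>Here \<sigma> c is the spot taken by car c; the hypothesis says that each car takes the first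
  free spot at or after its preference, given that the earlier cars took theirs.\<close>
lemma occ_Some_iff_parks:
  assumes "k \<le> m"
    and parks: "\<And>i. i \<in> {1..m} \<Longrightarrow>
      (\<And>s c. occ \<pi> n (i - 1) s = Some c \<longleftrightarrow> c \<in> {1..i - 1} \<and> \<sigma> c = s) \<Longrightarrow>
      free_spots \<pi> n i \<noteq> {} \<and> Min (free_spots \<pi> n i) = \<sigma> i"
  shows "occ \<pi> n k s = Some c \<longleftrightarrow> c \<in> {1..k} \<and> \<sigma> c = s"
  using assms(1)
proof (induction k arbitrary: s c)
  case (Suc k)
  have IH: "occ \<pi> n (Suc k - 1) s = Some c \<longleftrightarrow> c \<in> {1..Suc k - 1} \<and> \<sigma> c = s" for s c
    using Suc.IH Suc.prems by simp
  have ne: "free_spots \<pi> n (Suc k) \<noteq> {}" and min: "Min (free_spots \<pi> n (Suc k)) = \<sigma> (Suc k)"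
    using parks[OF _ IH] Suc.prems by auto
  then have occ_Suc: "occ \<pi> n (Suc k) = (occ \<pi> n k)(\<sigma> (Suc k) := Some (Suc k))"
    by (simp only: occ.simps Let_def diff_Suc_1 if_False)
  have "\<sigma> (Suc k) \<in> free_spots \<pi> n (Suc k)" using Min_in[OF finite_free_spots ne] min by simp
  then have free: "occ \<pi> n k (\<sigma> (Suc k)) = None" by simp
  have fresh: "\<sigma> c \<noteq> \<sigma> (Suc k)" if "c \<in> {1..k}" for c
  proof
    assume "\<sigma> c = \<sigma> (Suc k)"
    then have "occ \<pi> n k (\<sigma> (Suc k)) = Some c" using Suc.IH Suc.prems that by simp
    with free show False by simp
  qed
  show ?case
  proof (cases "s = \<sigma> (Suc k)")
    case True
    then show ?thesis using fresh unfolding occ_Suc by (auto simp: le_Suc_eq)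
  next
    case False
    then show ?thesis using Suc.IH[of s c] Suc.prems unfolding occ_Suc by (auto simp: le_Suc_eq)
  qed
qed simp

locale parking_function =
  fixes m n :: nat and \<pi> :: "nat \<Rightarrow> nat"
  assumes pf: "\<pi> \<in> parking_functions m n"
begin

lemma pref_range: "i \<in> {1..m} \<Longrightarrow> \<pi> i \<in> {1..n}"
  using pf by (auto simp: parking_functions_def)

lemma extensional: "\<pi> \<in> extensional {1..m}"
  using pf by (simp add: parking_functions_def PiE_def)

lemma free_spots_nonempty:
  assumes "i \<in> {1..m}"
  shows "free_spots \<pi> n i \<noteq> {}"
proof -
  obtain s where "\<pi> i \<le> s" "s \<le> n" "occ \<pi> n (i - 1) s = None"
    using pf assms unfolding parking_functions_def by blast
  then show ?thesis by blast
qed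

lemma spot_in_free_spots: "i \<in> {1..m} \<Longrightarrow> spot \<pi> n i \<in> free_spots \<pi> n i"
  unfolding spot_def by (rule Min_in[OF finite_free_spots free_spots_nonempty])

lemma pref_le_spot: "i \<in> {1..m} \<Longrightarrow> \<pi> i \<le> spot \<pi> n i"
  and spot_le: "i \<in> {1..m} \<Longrightarrow> spot \<pi> n i \<le> n"
  using spot_in_free_spots by auto

lemma occupied_before_spot:
  assumes i: "i \<in> {1..m}" and s: "\<pi> i \<le> s" "s < spot \<pi> n i"
  shows "occ \<pi> n (i - 1) s \<noteq> None"
proof
  assume "occ \<pi> n (i - 1) s = None"
  then have "s \<in> free_spots \<pi> n i" using s spot_le[OF i] by simp
  then have "spot \<pi> n i \<le> s" unfolding spot_def by (rule Min_le[OF finite_free_spots])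
  then show False using s by simp
qed

lemma occ_iff_spot:
  assumes "k \<le> m"
  shows "occ \<pi> n k s = Some c \<longleftrightarrow> c \<in> {1..k} \<and> spot \<pi> n c = s"
  using assms
proof (rule occ_Some_iff_parks)
  fix i
  assume "i \<in> {1..m}"
  then show "free_spots \<pi> n i \<noteq> {} \<and> Min (free_spots \<pi> n i) = spot \<pi> n i"
    unfolding spot_def using free_spots_nonempty by blast
qed

lemma occ_Some_iff_spot: "occ \<pi> n m s = Some c \<longleftrightarrow> c \<in> {1..m} \<and> spot \<pi> n c = s"
  by (simp add: occ_iff_spot)

lemma spot_inj: "i \<in> {1..m} \<Longrightarrow> j \<in> {1..m} \<Longrightarrow> spot \<pi> n i = spot \<pi> n j \<Longrightarrow> i = j"
  using occ_Some_iff_spot by (metis option.inject)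

lemma earlier_car_parked:
  assumes i: "i \<in> {1..m}" and s: "\<pi> i \<le> s" "s < spot \<pi> n i"
  obtains c where "c \<in> {1..m}" "c < i" "spot \<pi> n c = s"
proof -
  obtain c where "occ \<pi> n (i - 1) s = Some c" using occupied_before_spot[OF i s] by blast
  moreover have "i - 1 \<le> m" using i by auto
  ultimately have "c \<in> {1..i - 1}" "spot \<pi> n c = s" using occ_iff_spot by blast+
  then show ?thesis using that i by auto
qed

lemma occ_0: "occ \<pi> n m 0 = None"
proof (rule ccontr)
  assume "occ \<pi> n m 0 \<noteq> None"
  then obtain c where "c \<in> {1..m}" "spot \<pi> n c = 0" using occ_Some_iff_spot by blast
  then show False using pref_le_spot pref_range by fastforce
qed

lemma occupied_spots: "{t. occ \<pi> n m t \<noteq> None} = spot \<pi> n ` {1..m}"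
  by (auto simp: occ_Some_iff_spot)

lemma card_empty_spots: "card {t\<in>{1..n}. occ \<pi> n m t = None} = n - m"
proof -
  have "{t\<in>{1..n}. occ \<pi> n m t = None} = {1..n} - spot \<pi> n ` {1..m}"
    using occupied_spots by blast
  moreover have "spot \<pi> n ` {1..m} \<subseteq> {1..n}"
    using pref_le_spot spot_le pref_range by fastforce
  moreover have "card (spot \<pi> n ` {1..m}) = m"
    using spot_inj by (simp add: card_image inj_on_def)
  ultimately show ?thesis by (simp add: card_Diff_subset)
qed
end

section \<open>From forests to parking functions\<close>

definition forest_to_pf :: "nat \<Rightarrow> nat \<Rightarrow> (nat \<Rightarrow> node) \<Rightarrow> nat \<Rightarrow> nat" where
  "forest_to_pf m n p = (\<lambda>i\<in>{1..m}. visit_step m n p (p i) + 1)"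

context ordered_forest
begin

abbreviation pref :: "nat \<Rightarrow> nat" where
  "pref \<equiv> forest_to_pf m n p"

lemma pref_eq: "i \<in> {1..m} \<Longrightarrow> pref i = step (p i) + 1"
  by (simp add: forest_to_pf_def)

text \<open>Car i finds the spots between its parent's step and its own step taken by the smaller
  labels visited in between, and its own step free.\<close>
lemma free_spots_pref:
  assumes i: "i \<in> {1..m}"
    and occ: "\<And>s c. occ pref n (i - 1) s = Some c \<longleftrightarrow> c \<in> {1..i - 1} \<and> step (Inl c) = s"
  shows "free_spots pref n i \<noteq> {} \<and> Min (free_spots pref n i) = step (Inl i)"
proof -
  have "occ pref n (i - 1) (step (Inl i)) = None"
  proof (rule ccontr)
    assume "occ pref n (i - 1) (step (Inl i)) \<noteq> None"
    then obtain c where "occ pref n (i - 1) (step (Inl i)) = Some c" by blast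
    then have c: "c \<in> {1..i - 1}" "step (Inl c) = step (Inl i)" using occ by blast+
    moreover have "c \<in> {1..m}" using c(1) i by auto
    ultimately have "Inl c = Inl i" using step_inj[of "Inl c" "Inl i"] i by simp
    then show False using c(1) by auto
  qed
  moreover have "pref i \<le> step (Inl i)" using pref_eq[OF i] step_parent_less[OF i] by simp
  ultimately have mem: "step (Inl i) \<in> free_spots pref n i" using step_le[of "Inl i"] i by simp
  have low: "step (Inl i) \<le> s" if s: "s \<in> free_spots pref n i" for s
  proof (rule ccontr)
    assume "\<not> step (Inl i) \<le> s"
    then have "s < step (Inl i)" by simp
    moreover have "step (p i) < s" using s pref_eq[OF i] by simp
    ultimately obtain j where j: "visits ! s = Inl j" "j \<in> {1..m}" "j < i"
      using visit_between_parent_child[OF i] by blast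
    have "step (Inl j) = s" using step_nth_visits[of s] j(1) s by simp
    then have "occ pref n (i - 1) s = Some j" using occ j by simp
    then show False using s by simp
  qed
  have "Min (free_spots pref n i) = step (Inl i)" by (rule Min_eqI) (use mem low in simp_all)
  then show ?thesis using mem by blast
qed

lemma occ_pref:
  assumes "k \<le> m"
  shows "occ pref n k s = Some c \<longleftrightarrow> c \<in> {1..k} \<and> step (Inl c) = s"
  using assms free_spots_pref by (rule occ_Some_iff_parks)

lemma spot_pref:
  assumes i: "i \<in> {1..m}"
  shows "spot pref n i = step (Inl i)" and "free_spots pref n i \<noteq> {}"
proof -
  have "free_spots pref n i \<noteq> {} \<and> Min (free_spots pref n i) = step (Inl i)"
    using i by (intro free_spots_pref occ_pref) auto
  then show "spot pref n i = step (Inl i)" "free_spots pref n i \<noteq> {}"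
    by (simp_all add: spot_def)
qed

lemma pref_in_parking_functions: "pref \<in> parking_functions m n"
proof -
  have "step (p i) + 1 \<in> {1..n}" if "i \<in> {1..m}" for i
    using step_parent_less[OF that] step_le[of "Inl i"] that by simp
  then have "pref \<in> {1..m} \<rightarrow>\<^sub>E {1..n}" by (simp add: forest_to_pf_def)
  moreover have "\<forall>i\<in>{1..m}. \<exists>s. s \<in> free_spots pref n i" using spot_pref(2) by blast
  ultimately show ?thesis by (simp add: parking_functions_def)
qed

lemma lucky_pref: "lucky m n pref = psa m n p"
  unfolding lucky_def psa_def using spot_pref(1) pref_eq
  by (intro arg_cong[where f = card] Collect_cong) auto

lemma probes_pref: "probes m n pref = wait m n p"
  unfolding probes_def wait_def
proof (rule sum.cong)
  fix i
  assume i: "i \<in> {1..m}"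
  show "spot pref n i - pref i + 1 = step (Inl i) - step (p i)"
    using spot_pref(1)[OF i] pref_eq[OF i] step_parent_less[OF i] by simp
qed simp

lemma occ_pref_Some_iff_visits:
  assumes "s \<le> n"
  shows "occ pref n m s = Some c \<longleftrightarrow> visits ! s = Inl c"
  using occ_pref[of m s c] visits_in_nodes[OF assms] assms step_nth_visits visits_step
  by (metis Inl_in_nodes order.refl)

lemma occ_pref_None_iff_visits:
  assumes "s \<le> n"
  shows "occ pref n m s = None \<longleftrightarrow> \<not> isl (visits ! s)"
  using occ_pref_Some_iff_visits[OF assms] by (metis isl_def not_None_eq)

end

section \<open>From parking functions to forests\<close>

text \<open>Spot 0 is a virtual spot that is always empty; the empty spots 0, 1, 2, ... stand for
  the roots of the trees in their order, and an occupied spot for the car parked there.\<close>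
definition spot_node :: "nat \<Rightarrow> nat \<Rightarrow> (nat \<Rightarrow> nat) \<Rightarrow> nat \<Rightarrow> node" where
  "spot_node m n \<pi> s = (case occ \<pi> n m s of
      Some c \<Rightarrow> Inl c
    | None \<Rightarrow> Inr (card {t\<in>{1..s}. occ \<pi> n m t = None}))"

definition pf_to_forest :: "nat \<Rightarrow> nat \<Rightarrow> (nat \<Rightarrow> nat) \<Rightarrow> nat \<Rightarrow> node" where
  "pf_to_forest m n \<pi> = (\<lambda>i\<in>{1..m}. spot_node m n \<pi> (\<pi> i - 1))"

lemma spot_node_eq_Inl_iff: "spot_node m n \<pi> s = Inl c \<longleftrightarrow> occ \<pi> n m s = Some c"
  by (auto simp: spot_node_def split: option.splits)

lemma isl_spot_node: "isl (spot_node m n \<pi> s) \<longleftrightarrow> occ \<pi> n m s \<noteq> None"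
  by (simp add: spot_node_def split: option.split)

lemma card_empty_spots_less:
  assumes "a < b" "occ \<pi> n m b = None"
  shows "card {t\<in>{1..a}. occ \<pi> n m t = None} < card {t\<in>{1..b}. occ \<pi> n m t = None}"
proof (rule psubset_card_mono)
  have "b \<in> {t\<in>{1..b}. occ \<pi> n m t = None}" "b \<notin> {t\<in>{1..a}. occ \<pi> n m t = None}"
    using assms by auto
  then show "{t\<in>{1..a}. occ \<pi> n m t = None} \<subset> {t\<in>{1..b}. occ \<pi> n m t = None}"
    using assms(1) by fastforce
qed simp

context parking_function
begin

abbreviation node_at :: "nat \<Rightarrow> node" where
  "node_at \<equiv> spot_node m n \<pi>"

abbreviation parent :: "nat \<Rightarrow> node" where
  "parent \<equiv> pf_to_forest m n \<pi>"

lemma parent_eq: "i \<in> {1..m} \<Longrightarrow> parent i = node_at (\<pi> i - 1)"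
  by (simp add: pf_to_forest_def)

lemma node_at_0: "node_at 0 = Inr 0"
  by (simp add: spot_node_def occ_0)

lemma node_at_inj:
  assumes eq: "node_at s = node_at s'"
  shows "s = s'"
proof (cases "occ \<pi> n m s")
  case (Some c)
  then have "occ \<pi> n m s' = Some c" using eq spot_node_eq_Inl_iff by metis
  then show ?thesis using Some occ_Some_iff_spot by auto
next
  case None
  then have None': "occ \<pi> n m s' = None" using eq spot_node_eq_Inl_iff by (metis not_Some_eq)
  then have "card {t\<in>{1..s}. occ \<pi> n m t = None} = card {t\<in>{1..s'}. occ \<pi> n m t = None}"
    using eq None by (simp add: spot_node_def)
  then show ?thesis
    using card_empty_spots_less[of s s' \<pi> n m] card_empty_spots_less[of s' s \<pi> n m] None None'
    by (cases s s' rule: linorder_cases) simp_all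
qed

lemma node_at_in_nodes:
  assumes "s \<le> n"
  shows "node_at s \<in> nodes m n"
proof (cases "occ \<pi> n m s")
  case (Some c)
  then have "c \<in> {1..m}" using occ_Some_iff_spot by blast
  then show ?thesis using Some by (simp add: spot_node_def)
next
  case None
  have "card {t\<in>{1..s}. occ \<pi> n m t = None} \<le> card {t\<in>{1..n}. occ \<pi> n m t = None}"
    using assms by (intro card_mono) auto
  then show ?thesis using None card_empty_spots by (simp add: spot_node_def)
qed

lemma parent_in_nodes:
  assumes "i \<in> {1..m}"
  shows "parent i \<in> nodes m n"
proof -
  have "\<pi> i - 1 \<le> n" using pref_range[OF assms] by auto
  then show ?thesis using parent_eq[OF assms] node_at_in_nodes by simp
qed

text \<open>Induction on the spot: a non-root parent has parked before its child's preferred spot.\<close>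
lemma parent_reaches_root: "i \<in> {1..m} \<Longrightarrow> \<exists>k. \<not> isl ((up parent ^^ k) (Inl i))"
proof (induction "spot \<pi> n i" arbitrary: i rule: less_induct)
  case less
  show ?case
  proof (cases "parent i")
    case (Inl c)
    then have "occ \<pi> n m (\<pi> i - 1) = Some c"
      using parent_eq[OF less.prems] spot_node_eq_Inl_iff by metis
    then have c: "c \<in> {1..m}" "spot \<pi> n c = \<pi> i - 1" using occ_Some_iff_spot by auto
    moreover have "spot \<pi> n c < spot \<pi> n i"
      using c(2) pref_le_spot[OF less.prems] pref_range[OF less.prems] by auto
    ultimately obtain k where "\<not> isl ((up parent ^^ k) (Inl c))" using less.hyps by blast
    then show ?thesis using Inl by (metis funpow_up_Suc_Inl)
  next
    case (Inr r)
    then show ?thesis by (metis funpow_up_Suc_Inl funpow_0 sum.disc(2))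
  qed
qed

lemma pf_to_forest_in_ordered_forests: "parent \<in> ordered_forests m n"
proof -
  have "parent \<in> {1..m} \<rightarrow>\<^sub>E nodes m n"
    using parent_in_nodes by (simp add: pf_to_forest_def)
  then show ?thesis
    using parent_reaches_root unfolding ordered_forests_def nodes_def by blast
qed

lemma node_at_spot: "i \<in> {1..m} \<Longrightarrow> node_at (spot \<pi> n i) = Inl i"
  using occ_Some_iff_spot spot_node_eq_Inl_iff by blast

lemma unblocked_parent_iff:
  "i \<in> unblocked m parent (map node_at [0..<Suc s]) \<longleftrightarrow>
    i \<in> {1..m} \<and> \<pi> i \<le> Suc s \<and> Suc s \<le> spot \<pi> n i"
proof (cases "i \<in> {1..m}")
  case True
  have visited: "set (map node_at [0..<Suc s]) = node_at ` {0..s}"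
    by (simp only: set_map set_upt atLeastLessThanSuc_atLeastAtMost)
  have "parent i \<in> node_at ` {0..s} \<longleftrightarrow> \<pi> i - 1 \<le> s"
    using parent_eq[OF True] by (auto dest: node_at_inj)
  moreover have "Inl i \<in> node_at ` {0..s} \<longleftrightarrow> spot \<pi> n i \<le> s"
    using node_at_spot[OF True] by (force dest: node_at_inj)
  ultimately show ?thesis
    using True pref_range[OF True] unfolding unblocked_def visited by auto
qed (auto simp: unblocked_def)

lemma ps_next_parent: "ps_next m parent (map node_at [0..<Suc s]) = node_at (Suc s)"
proof (cases "occ \<pi> n m (Suc s)")
  case (Some c)
  then have c: "c \<in> {1..m}" "spot \<pi> n c = Suc s" using occ_Some_iff_spot by blast+
  let ?U = "unblocked m parent (map node_at [0..<Suc s])"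
  have "c \<in> ?U" using unblocked_parent_iff c pref_le_spot[OF c(1)] by simp
  moreover have "c \<le> i" if "i \<in> ?U" for i
  proof (rule ccontr)
    assume "\<not> c \<le> i"
    moreover have i: "i \<in> {1..m}" "\<pi> i \<le> Suc s" "Suc s \<le> spot \<pi> n i"
      using that unblocked_parent_iff by auto
    moreover have "spot \<pi> n i \<noteq> Suc s" using spot_inj[OF i(1) c(1)] c(2) calculation(1) by auto
    ultimately have "Suc s < spot \<pi> n i" by simp
    then obtain c' where "c' \<in> {1..m}" "c' < i" "spot \<pi> n c' = Suc s"
      using earlier_car_parked[OF i(1,2)] by blast
    then show False using spot_inj[OF _ c(1)] c(2) \<open>\<not> c \<le> i\<close> by auto
  qed
  ultimately have "Min ?U = c" by (intro Min_eqI) auto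
  then show ?thesis using \<open>c \<in> ?U\<close> Some by (auto simp: ps_next_eq spot_node_def)
next
  case None
  have "unblocked m parent (map node_at [0..<Suc s]) = {}"
  proof (rule ccontr)
    assume "unblocked m parent (map node_at [0..<Suc s]) \<noteq> {}"
    then obtain i where i: "i \<in> {1..m}" "\<pi> i \<le> Suc s" "Suc s \<le> spot \<pi> n i"
      using unblocked_parent_iff by blast
    moreover have "occ \<pi> n m (spot \<pi> n i) = Some i" using occ_Some_iff_spot i(1) by blast
    then have "spot \<pi> n i \<noteq> Suc s" using None by auto
    ultimately have "Suc s < spot \<pi> n i" by simp
    then obtain c where "c \<in> {1..m}" "spot \<pi> n c = Suc s"
      using earlier_car_parked[OF i(1,2)] by blast
    then have "occ \<pi> n m (Suc s) = Some c" using occ_Some_iff_spot by blast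
    with None show False by simp
  qed
  moreover have "length (filter (\<lambda>x. \<not> isl x) (map node_at [0..<Suc s]))
      = card {t. t < Suc s \<and> \<not> isl (map node_at [0..<Suc s] ! t)}"
    by (simp only: length_filter_conv_card length_map length_upt diff_zero)
  moreover have "\<dots> = card {t. t < Suc s \<and> occ \<pi> n m t = None}"
    by (intro arg_cong[where f = card] Collect_cong)
       (auto simp: isl_spot_node simp del: upt_Suc)
  moreover have "\<dots> = card {t\<in>{1..Suc s}. occ \<pi> n m t = None}"
    using occ_0 None by (intro card_less_eq_card_atLeastAtMost)
  ultimately show ?thesis using None by (simp add: ps_next_eq spot_node_def)
qed

lemma ps_order_parent: "ps_order m s parent = map node_at [0..<Suc s]"
proof (induction s)
  case 0
  then show ?case by (simp add: node_at_0)
next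
  case (Suc s)
  then show ?case by (simp add: ps_order_Suc ps_next_parent del: upt_Suc) simp
qed

lemma visits_parent: "s \<le> n \<Longrightarrow> ps_order m n parent ! s = node_at s"
  by (simp add: ps_order_parent nth_map_upt del: upt_Suc)

lemma forest_to_pf_pf_to_forest:
  assumes "m < n"
  shows "forest_to_pf m n parent = \<pi>"
proof
  interpret F: ordered_forest m n parent
    using pf_to_forest_in_ordered_forests assms by unfold_locales
  fix i
  show "forest_to_pf m n parent i = \<pi> i"
  proof (cases "i \<in> {1..m}")
    case True
    have "\<pi> i - 1 \<le> n" using pref_range[OF True] by auto
    then have "F.step (parent i) = \<pi> i - 1"
      using parent_eq[OF True] visits_parent F.step_nth_visits by metis
    then show ?thesis using F.pref_eq[OF True] pref_range[OF True] by simp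
  next
    case False
    then show ?thesis using extensional by (auto simp: forest_to_pf_def extensional_def)
  qed
qed

end

context ordered_forest
begin

lemma spot_node_pref: "s \<le> n \<Longrightarrow> spot_node m n pref s = visits ! s"
proof (cases "visits ! s")
  case (Inl c)
  assume "s \<le> n"
  then show ?thesis using Inl occ_pref_Some_iff_visits[of s c] by (simp add: spot_node_def)
next
  case (Inr r)
  assume s: "s \<le> n"
  have "r = card {t\<in>{1..s}. \<not> isl (visits ! t)}" using visits_root_number[OF s Inr] .
  also have "\<dots> = card {t\<in>{1..s}. occ pref n m t = None}"
    using occ_pref_None_iff_visits s by (intro arg_cong[where f = card]) auto
  finally show ?thesis using Inr occ_pref_None_iff_visits[OF s] by (simp add: spot_node_def)
qed

lemma pf_to_forest_forest_to_pf: "pf_to_forest m n pref = p"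
proof
  fix i
  show "pf_to_forest m n pref i = p i"
  proof (cases "i \<in> {1..m}")
    case True
    have "pf_to_forest m n pref i = spot_node m n pref (step (p i))"
      using True by (simp add: pf_to_forest_def pref_eq)
    also have "\<dots> = p i" using spot_node_pref step_le parent_in_nodes[OF True] by simp
    finally show ?thesis .
  next
    case False
    then show ?thesis using extensional by (auto simp: pf_to_forest_def extensional_def)
  qed
qed

end

section \<open>Records\<close>

lemma length_birds_eye [simp]: "length (birds_eye m n \<pi>) = n"
  by (simp add: birds_eye_def)

lemma nth_birds_eye: "k < n \<Longrightarrow> birds_eye m n \<pi> ! k = occ \<pi> n m (Suc k)"
  by (simp add: birds_eye_def nth_map_upt del: upt_Suc)

context ordered_forest
begin

lemma birds_eye_pref_Some_iff:
  "k < n \<Longrightarrow> birds_eye m n pref ! k = Some c \<longleftrightarrow> visits ! Suc k = Inl c"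
  by (simp add: nth_birds_eye occ_pref_Some_iff_visits)

lemma birds_eye_pref_None_iff:
  "k < n \<Longrightarrow> birds_eye m n pref ! k = None \<longleftrightarrow> \<not> isl (visits ! Suc k)"
  by (simp add: nth_birds_eye occ_pref_None_iff_visits)

lemma forest_record_imp_word_record:
  assumes "c \<in> forest_Rec m p"
  shows "c \<in> pf_Rec m n pref"
proof -
  let ?w = "birds_eye m n pref"
  have c: "c \<in> {1..m}" and rec: "\<And>d a. (up p ^^ d) (Inl c) = Inl a \<Longrightarrow> a \<le> c"
    using assms by (auto simp: forest_Rec_def)
  define K where "K = step (Inl c)"
  have K: "0 < K" "K \<le> n" "visits ! K = Inl c"
    using step_pos[OF c] step_le[of "Inl c"] c by (simp_all add: K_def)
  have "K - 1 < n" "?w ! (K - 1) = Some c" using K birds_eye_pref_Some_iff[of "K - 1" c] by auto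
  moreover have "the (?w ! j) < c" if j: "j < K - 1" and run: "\<forall>t\<in>{j..K - 1}. ?w ! t \<noteq> None" for j
  proof -
    have nonroot: "\<forall>u\<in>{Suc j..K}. isl (visits ! u)"
    proof
      fix u
      assume u: "u \<in> {Suc j..K}"
      obtain t where t: "u = Suc t" "t \<in> {j..K - 1}" using u by (cases u) auto
      then have "?w ! t \<noteq> None" "t < n" using run K(1,2) by auto
      then show "isl (visits ! u)" using birds_eye_pref_None_iff t(1) by simp
    qed
    have "Suc j < K" using j by simp
    then have "isl (visits ! Suc j)" using nonroot by simp
    then obtain z where z: "visits ! Suc j = Inl z" by (cases "visits ! Suc j") auto
    then obtain d a where "(up p ^^ d) (Inl c) = Inl a" "z \<le> a"
      using visited_in_run_le_ancestor[OF K(2,3) \<open>Suc j < K\<close> nonroot] by blast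
    then have "z \<le> c" using rec le_trans by blast
    moreover have "z \<noteq> c" using z K step_nth_visits[of K] step_nth_visits[of "Suc j"] j by force
    moreover have "?w ! j = Some z" using birds_eye_pref_Some_iff[of j z] z j K by simp
    ultimately show ?thesis by simp
  qed
  ultimately show ?thesis unfolding pf_Rec_def word_Rec_def by auto
qed

lemma word_record_imp_forest_record:
  assumes "c \<in> pf_Rec m n pref"
  shows "c \<in> forest_Rec m p"
proof -
  let ?w = "birds_eye m n pref"
  obtain k where k: "k < n" "?w ! k = Some c"
    and rec: "\<And>j. j < k \<Longrightarrow> \<forall>t\<in>{j..k}. ?w ! t \<noteq> None \<Longrightarrow> the (?w ! j) < c"
    using assms unfolding pf_Rec_def word_Rec_def by auto
  have vk: "visits ! Suc k = Inl c" using birds_eye_pref_Some_iff k by simp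
  then have c: "c \<in> {1..m}" using visits_in_nodes[of "Suc k"] k by simp
  have Tc: "step (Inl c) = Suc k" using step_nth_visits[of "Suc k"] vk k by simp
  have "a \<le> c" if a: "(up p ^^ d) (Inl c) = Inl a" for d a
  proof (rule ccontr)
    assume "\<not> a \<le> c"
    have am: "a \<in> {1..m}" using ancestor_in_nodes[OF c, of d] a by simp
    have "step (Inl a) \<le> Suc k" using step_ancestor_le[OF c, of d] a Tc by simp
    moreover have "step (Inl a) \<noteq> Suc k" using step_inj[of "Inl a" "Inl c"] am c Tc \<open>\<not> a \<le> c\<close> by auto
    ultimately obtain j where j: "step (Inl a) = Suc j" "j < k" using step_pos[OF am]
      by (metis Suc_less_SucD gr0_implies_Suc le_neq_implies_less)
    have "?w ! t \<noteq> None" if "t \<in> {j..k}" for t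
    proof -
      have "isl (visits ! Suc t)"
      proof (cases "t = j")
        case True
        then show ?thesis using j(1) visits_step[of "Inl a"] am by simp
      next
        case False
        then show ?thesis
          using visits_nonroot_below_ancestor[OF c, of d "Suc t"] that a j(1) Tc by simp
      qed
      then show ?thesis using birds_eye_pref_None_iff[of t] that k by simp
    qed
    then have "the (?w ! j) < c" using rec j(2) by blast
    moreover have "?w ! j = Some a"
      using birds_eye_pref_Some_iff[of j a] j visits_step[of "Inl a"] am k by simp
    ultimately show False using \<open>\<not> a \<le> c\<close> by simp
  qed
  then show ?thesis using c by (auto simp: forest_Rec_def)
qed

lemma pf_Rec_pref: "pf_Rec m n pref = forest_Rec m p"
  using forest_record_imp_word_record word_record_imp_forest_record by blast

end

lemma bij_betw_forest_to_pf:
  assumes "m < n"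
  shows "bij_betw (forest_to_pf m n) (ordered_forests m n) (parking_functions m n)"
proof (rule bij_betw_byWitness[where f' = "pf_to_forest m n"])
  show "\<forall>p\<in>ordered_forests m n. pf_to_forest m n (forest_to_pf m n p) = p"
    using ordered_forest.pf_to_forest_forest_to_pf assms ordered_forest.intro by blast
  show "\<forall>\<pi>\<in>parking_functions m n. forest_to_pf m n (pf_to_forest m n \<pi>) = \<pi>"
    using parking_function.forest_to_pf_pf_to_forest assms parking_function.intro by blast
  show "forest_to_pf m n ` ordered_forests m n \<subseteq> parking_functions m n"
    using ordered_forest.pref_in_parking_functions assms ordered_forest.intro by blast
  show "pf_to_forest m n ` parking_functions m n \<subseteq> ordered_forests m n"
    using parking_function.pf_to_forest_in_ordered_forests parking_function.intro by blast
qed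

theorem theorem4p6:
  fixes m n a b :: nat and R :: "nat set"
  assumes "m < n"
  shows "card {p \<in> ordered_forests m n. forest_Rec m p = R \<and> psa m n p = a \<and> wait m n p = b}
       = card {\<pi> \<in> parking_functions m n. pf_Rec m n \<pi> = R \<and> lucky m n \<pi> = a \<and> probes m n \<pi> = b}"
proof -
  have stats: "pf_Rec m n (forest_to_pf m n p) = forest_Rec m p \<and> lucky m n (forest_to_pf m n p) = psa m n p
      \<and> probes m n (forest_to_pf m n p) = wait m n p" if "p \<in> ordered_forests m n" for p
  proof -
    interpret ordered_forest m n p using that assms by unfold_locales
    show ?thesis using pf_Rec_pref lucky_pref probes_pref by blast
  qed
  have "bij_betw (forest_to_pf m n)
      {p \<in> ordered_forests m n. forest_Rec m p = R \<and> psa m n p = a \<and> wait m n p = b}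
      {\<pi> \<in> parking_functions m n. pf_Rec m n \<pi> = R \<and> lucky m n \<pi> = a \<and> probes m n \<pi> = b}"
    by (rule bij_betw_Collect[OF bij_betw_forest_to_pf[OF assms]]) (use stats in auto)
  then show ?thesis by (rule bij_betw_same_card)
qed

end
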